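(* Consider the cache-aided combination network described in the context, with parameters $h>r\ge 1$, $K=\binom{h}{r}\le D$, $\hat K=\binom{h-1}{r-1}$, and relay cache size $N$ with $0\le N\le \frac{D}{r}$. Let $t_1\in\{0,1,\dots,\min(\hat K,\lfloor \hat K N/D\rfloor)\}$ and $t_2\in\{0,1,\dots,\hat K\}$, and let $$M=\frac{(t_1-t_2)Nr}{\hat K}+\frac{t_2 D}{\hat K}.$$ Then, with user cache size $M$ and relay cache size $N$, the rate pair $(R_1,R_2)$ with $$R_1=\frac{\hat K-t_2}{r(t_2+1)}\Big(1-\frac{Nr}{D}\Big),\qquad R_2=\frac{1}{r}\Big(1-\frac{M}{D}\Big)$$ is achievable; i.e., the minimal achievable normalized rates satisfy $R_1\le \frac{\hat K-t_2}{r(t_2+1)}(1-\frac{Nr}{D})$ and $R_2\le \frac1r(1-\frac MD)$. Furthermore, for fixed $N$, every point of the convex envelope of the set of triples $(M,R_1,R_2)$ obtained above is achievable (i.e., a convex combination of the listed memory values $M$ admits the corresponding convex combination of the listed rate pairs).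
   Context: Combination network: a server holds $D$ independent files $W_1,\dots,W_D$, each uniformly distributed over $F$ bits. There are $h$ relay nodes $\Gamma_1,\dots,\Gamma_h$ and $K=\binom{h}{r}$ end users ($r<h$); each end user is connected to a distinct set of $r$ relays (one user for each $r$-subset of relays), so each relay is connected to $\hat K=\binom{h-1}{r-1}=rK/h$ users. The server is connected to every relay. All links (server–relay and relay–user) are noiseless unicast links. Assume $K\le D$. Each end user has a cache of $MF$ bits and each relay a cache of $NF$ bits. Placement phase (before demands are known): the server fills relay $j$'s cache with $V_j$ and user $k$'s cache with $Z_k$, functions of the files, with $H(V_j)\le NF$, $H(Z_k)\le MF$. Delivery phase: each user $k$ requests file $W_{d_k}$, $\mathbf d=(d_1,\dots,d_K)\in\{1,\dots,D\}^K$ arbitrary; the server sends to each relay $\Gamma_i$ a signal $X_{i,\mathbf d}$ (a function of the files and $\mathbf d$) of $R_1F$ bits; relay $\Gamma_i$ sends to each connected user $k$ a signal $Y_{i,\mathbf d,k}$ (a function of $X_{i,\mathbf d}$, $V_i$, $\mathbf d$) of $R_2F$ bits; user $k$ forms an estimate $\hat W_{d_k}$ from $Z_k$, $\mathbf d$, and the $r$ signals it receives from its relays. A rate pair $(R_1,R_2)$ (normalized by $F$) is achievable for cache sizes $(M,N)$ if for every $\epsilon>0$ and all sufficiently large $F$ there exist such placement and delivery functions with $\max_{\mathbf d,k}P(\hat W_{d_k}\neq W_{d_k})<\epsilon$. *)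

theory Defs
  imports "HOL-Analysis.Analysis" "HOL-Library.FuncSet"
begin

text \<open>Relays are indexed 0..h-1; an end user is identified with its r-subset of relays.
 A file library is a map from file indices 1..D to bit strings of length F
 (value [] outside 1..D); it is uniformly distributed over all such libraries,
 which is the same as D independent files uniformly distributed over F bits.\<close>

definition users :: "nat \<Rightarrow> nat \<Rightarrow> nat set set" where
  "users h r = {A. A \<subseteq> {..<h} \<and> card A = r}"

definition libraries :: "nat \<Rightarrow> nat \<Rightarrow> (nat \<Rightarrow> bool list) set" where
  "libraries D F = {W. (\<forall>i\<in>{1..D}. length (W i) = F) \<and> (\<forall>i. i \<notin> {1..D} \<longrightarrow> W i = [])}"

definition demands :: "nat \<Rightarrow> nat \<Rightarrow> nat \<Rightarrow> (nat set \<Rightarrow> nat) set" where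
  "demands h r D = users h r \<rightarrow>\<^sub>E {1..D}"

definition unif_prob :: "'a set \<Rightarrow> ('a \<Rightarrow> bool) \<Rightarrow> real" where
  "unif_prob S P = real (card {x\<in>S. P x}) / real (card S)"

definition entropy_unif :: "'a set \<Rightarrow> ('a \<Rightarrow> 'b) \<Rightarrow> real" where
  "entropy_unif S f = (\<Sum>v\<in>f ` S. - unif_prob S (\<lambda>x. f x = v) * log 2 (unif_prob S (\<lambda>x. f x = v)))"

text \<open>A scheme for block length F:
  V j W      : cache content of relay j,
  Z k W      : cache content of user k,
  X i d W    : server-to-relay-i signal,
  Y i d k x v: signal from relay i to user k, given server signal x and relay cache v,
  G k d z y  : decoder of user k, given its cache z and the signals y i from its relays i \<in> k.\<close>
definition valid_scheme ::
  "nat \<Rightarrow> nat \<Rightarrow> nat \<Rightarrow> nat \<Rightarrow> real \<Rightarrow> real \<Rightarrow> real \<Rightarrow> real \<Rightarrow> real \<Rightarrow>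
   (nat \<Rightarrow> (nat \<Rightarrow> bool list) \<Rightarrow> bool list) \<Rightarrow>
   (nat set \<Rightarrow> (nat \<Rightarrow> bool list) \<Rightarrow> bool list) \<Rightarrow>
   (nat \<Rightarrow> (nat set \<Rightarrow> nat) \<Rightarrow> (nat \<Rightarrow> bool list) \<Rightarrow> bool list) \<Rightarrow>
   (nat \<Rightarrow> (nat set \<Rightarrow> nat) \<Rightarrow> nat set \<Rightarrow> bool list \<Rightarrow> bool list \<Rightarrow> bool list) \<Rightarrow>
   (nat set \<Rightarrow> (nat set \<Rightarrow> nat) \<Rightarrow> bool list \<Rightarrow> (nat \<Rightarrow> bool list) \<Rightarrow> bool list) \<Rightarrow> bool" where
  "valid_scheme h r D F M N R1 R2 \<epsilon> V Z X Y G \<longleftrightarrow>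
     (\<forall>j<h. entropy_unif (libraries D F) (V j) \<le> N * real F) \<and>
     (\<forall>k\<in>users h r. entropy_unif (libraries D F) (Z k) \<le> M * real F) \<and>
     (\<forall>d\<in>demands h r D. \<forall>i<h. \<forall>W\<in>libraries D F. real (length (X i d W)) \<le> R1 * real F) \<and>
     (\<forall>d\<in>demands h r D. \<forall>k\<in>users h r. \<forall>i\<in>k. \<forall>W\<in>libraries D F.
         real (length (Y i d k (X i d W) (V i W))) \<le> R2 * real F) \<and>
     (\<forall>d\<in>demands h r D. \<forall>k\<in>users h r.
         unif_prob (libraries D F)
           (\<lambda>W. G k d (Z k W) (\<lambda>i. if i \<in> k then Y i d k (X i d W) (V i W) else []) \<noteq> W (d k)) < \<epsilon>)"

definition achievable :: "nat \<Rightarrow> nat \<Rightarrow> nat \<Rightarrow> real \<Rightarrow> real \<Rightarrow> real \<Rightarrow> real \<Rightarrow> bool" where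
  "achievable h r D M N R1 R2 \<longleftrightarrow>
     (\<forall>\<epsilon>>0. \<exists>F0. \<forall>F\<ge>F0. \<exists>V Z X Y G. valid_scheme h r D F M N R1 R2 \<epsilon> V Z X Y G)"

end

theory Submission
  imports Defs "HOL-Computational_Algebra.Polynomial"
begin

(* Every file is cut into r chunks, which are the coefficients of a
   polynomial; relay i receives the binary digits of its value at i, so any r relays
   (an end user's relays) determine the file.  Relay i caches the fraction
   \<rho> = N r / D of every coded piece, and a fraction a of this cached part is
   also stored at each of its users.  The remaining fraction 1 - \<rho> is served to
   the Kh users of relay i by the coded caching scheme of Maddah-Ali and Niesen,
   mixed over the cache parameter t with weights \<mu> t: subfiles indexed by
   t-subsets of users are placed in those users' caches, the server sends XORs
   for (t+1)-subsets to the relay, which forwards to each user the XORs concerning it.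
   The resulting memory and rates are affine in (a, \<mu>), so the achieved triples
   form a convex set containing all corner points (a = t1/Kh, \<mu> = point mass at t2).
   Rounding errors are bounded independently of F and are absorbed by the slack \<delta>; the
   finitely many possible messages are finally encoded as bit strings of the
   allowed length, and a message taking at most 2^L values has entropy at most L. *)

section \<open>Entropy and bit encodings of finitely many messages\<close>

lemma entropy_unif_le_log_card:
  assumes fin: "finite S" and ne: "S \<noteq> {}"
  shows "entropy_unif S f \<le> log 2 (card (f ` S))"
proof -
  define n where "n = real (card S)"
  define c where "c v = real (card {x\<in>S. f x = v})" for v
  define m where "m = real (card (f ` S))"
  have n0: "n > 0" using fin ne by (simp add: n_def card_gt_0_iff)
  have cpos: "c v > 0" if "v \<in> f ` S" for v
    using that fin by (auto simp: c_def card_gt_0_iff)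
  have m0: "m > 0" using fin ne by (simp add: m_def card_gt_0_iff)
  have sumc: "(\<Sum>v\<in>f ` S. c v) = n"
  proof -
    have "card S = (\<Sum>v\<in>f ` S. card {x\<in>S. f x = v})"
      using sum.image_gen[OF fin, of "\<lambda>_. (1::nat)" f] by simp
    then show ?thesis by (simp add: c_def n_def)
  qed
  have up: "unif_prob S (\<lambda>x. f x = v) = c v / n" for v
    by (simp add: unif_prob_def c_def n_def)
  have "entropy_unif S f - log 2 m = (\<Sum>v\<in>f ` S. c v / n * log 2 (n / (c v * m)))"
  proof -
    have "(\<Sum>v\<in>f ` S. c v / n * log 2 (n / (c v * m))) =
          (\<Sum>v\<in>f ` S. - (c v / n) * log 2 (c v / n) - c v / n * log 2 m)"
    proof (rule sum.cong[OF refl])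
      fix v assume v: "v \<in> f ` S"
      have "log 2 (n / (c v * m)) = - log 2 (c v / n) - log 2 m"
        using cpos[OF v] n0 m0 by (simp add: log_divide log_mult)
      then show "c v / n * log 2 (n / (c v * m)) = - (c v / n) * log 2 (c v / n) - c v / n * log 2 m"
        by (simp only: right_diff_distrib)
    qed
    also have "\<dots> = entropy_unif S f - (\<Sum>v\<in>f ` S. c v / n) * log 2 m"
      by (simp add: entropy_unif_def up sum_subtractf sum_distrib_right)
    also have "(\<Sum>v\<in>f ` S. c v / n) = 1"
      using sumc n0 by (simp add: sum_divide_distrib[symmetric])
    finally show ?thesis by simp
  qed
  also have "\<dots> \<le> (\<Sum>v\<in>f ` S. c v / n * ((n / (c v * m) - 1) / ln 2))"
  proof (rule sum_mono)
    fix v assume v: "v \<in> f ` S"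
    have pos: "n / (c v * m) > 0" using cpos[OF v] n0 m0 by simp
    have "log 2 (n / (c v * m)) = ln (n / (c v * m)) / ln 2" by (simp add: log_def)
    also have "\<dots> \<le> (n / (c v * m) - 1) / ln 2"
      using ln_le_minus_one[OF pos] by (simp add: divide_right_mono)
    finally show "c v / n * log 2 (n / (c v * m)) \<le> c v / n * ((n / (c v * m) - 1) / ln 2)"
      using cpos[OF v] n0 by (intro mult_left_mono) auto
  qed
  also have "\<dots> = (\<Sum>v\<in>f ` S. (1 / m - c v / n)) / ln 2"
  proof -
    have "c v / n * ((n / (c v * m) - 1) / ln 2) = (1 / m - c v / n) / ln 2" if "v \<in> f ` S" for v
      using cpos[OF that] n0 m0 by (simp add: field_simps)
    then show ?thesis by (simp add: sum_divide_distrib)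
  qed
  also have "(\<Sum>v\<in>f ` S. (1 / m - c v / n)) = real (card (f ` S)) / m - (\<Sum>v\<in>f ` S. c v) / n"
    by (simp add: sum_subtractf sum_divide_distrib)
  also have "\<dots> = 0" using m0 n0 sumc by (simp add: m_def)
  finally show ?thesis by (simp add: m_def)
qed

lemma finite_libraries: "finite (libraries D F)"
proof -
  let ?P = "PiE {1..D} (\<lambda>_. {xs::bool list. set xs \<subseteq> UNIV \<and> length xs = F})"
  have "inj_on (\<lambda>W. restrict W {1..D}) (libraries D F)"
  proof (rule inj_onI)
    fix W W' assume W: "W \<in> libraries D F" and W': "W' \<in> libraries D F"
      and "restrict W {1..D} = restrict W' {1..D}"
    show "W = W'"
    proof
      fix i show "W i = W' i"
        using fun_cong[OF \<open>restrict W {1..D} = restrict W' {1..D}\<close>, of i] W W'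
        by (cases "i \<in> {1..D}") (auto simp: libraries_def)
    qed
  qed
  moreover have "(\<lambda>W. restrict W {1..D}) ` libraries D F \<subseteq> ?P"
    by (auto simp: libraries_def)
  moreover have "finite ?P"
    by (intro finite_PiE) (use finite_lists_length_eq[of "UNIV::bool set" F] in auto)
  ultimately show ?thesis by (meson finite_imageD finite_subset)
qed

lemma libraries_nonempty: "libraries D F \<noteq> {}"
proof -
  have "(\<lambda>i. if i \<in> {1..D} then replicate F False else []) \<in> libraries D F"
    by (auto simp: libraries_def)
  then show ?thesis by blast
qed

definition bit_encoding :: "nat \<Rightarrow> 'a set \<Rightarrow> 'a \<Rightarrow> bool list" where
  "bit_encoding L A = (SOME e. inj_on e A \<and> (\<forall>a\<in>A. length (e a) = L))"

lemma bit_encoding: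
  assumes "finite A" and "card A \<le> 2 ^ L"
  shows "inj_on (bit_encoding L A) A \<and> (\<forall>a\<in>A. length (bit_encoding L A a) = L)"
proof -
  let ?B = "{xs::bool list. set xs \<subseteq> UNIV \<and> length xs = L}"
  have "card ?B = 2 ^ L" using card_lists_length_eq[of "UNIV::bool set" L] by simp
  moreover have "finite ?B" by (rule finite_lists_length_eq) simp
  ultimately obtain e where "e ` A \<subseteq> ?B" "inj_on e A"
    using card_le_inj[OF assms(1), of ?B] assms(2) by auto
  then have "\<exists>e. inj_on e A \<and> (\<forall>a\<in>A. length (e a :: bool list) = L)" by auto
  from someI_ex[OF this] show ?thesis unfolding bit_encoding_def .
qed

lemma entropy_unif_bit_encoding_le:
  assumes "card (g ` libraries D F) \<le> 2 ^ L"
  shows "entropy_unif (libraries D F) (\<lambda>W. bit_encoding L (g ` libraries D F) (g W)) \<le> real L"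
proof -
  let ?S = "libraries D F" and ?e = "bit_encoding L (g ` libraries D F)"
  have inj: "inj_on ?e (g ` ?S)" using bit_encoding assms finite_libraries by blast
  have "entropy_unif ?S (\<lambda>W. ?e (g W)) \<le> log 2 (card ((\<lambda>W. ?e (g W)) ` ?S))"
    by (rule entropy_unif_le_log_card[OF finite_libraries libraries_nonempty])
  also have "card ((\<lambda>W. ?e (g W)) ` ?S) = card (g ` ?S)"
    using inj by (simp add: image_image[symmetric] card_image del: image_image)
  also have "log 2 (card (g ` ?S)) \<le> log 2 (2 ^ L)"
  proof (rule log_mono)
    show "0 < real (card (g ` ?S))"
      using finite_libraries libraries_nonempty by (simp add: card_gt_0_iff)
    have "real (card (g ` ?S)) \<le> real (2 ^ L)" using assms by (simp only: of_nat_le_iff)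
    then show "real (card (g ` ?S)) \<le> 2 ^ L" by simp
  qed simp
  also have "log 2 (2 ^ L) = real L" by (simp add: log_nat_power)
  finally show ?thesis .
qed

lemma valid_scheme_if_decodable:
  assumes "\<epsilon> > 0"
    and "\<forall>j<h. entropy_unif (libraries D F) (V j) \<le> N * real F"
    and "\<forall>k\<in>users h r. entropy_unif (libraries D F) (Z k) \<le> M * real F"
    and "\<forall>d\<in>demands h r D. \<forall>i<h. \<forall>W\<in>libraries D F. real (length (X i d W)) \<le> R1 * real F"
    and "\<forall>d\<in>demands h r D. \<forall>k\<in>users h r. \<forall>i\<in>k. \<forall>W\<in>libraries D F.
           real (length (Y i d k (X i d W) (V i W))) \<le> R2 * real F"
    and decodable: "\<And>d k W W'. d \<in> demands h r D \<Longrightarrow> k \<in> users h r \<Longrightarrow>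
           W \<in> libraries D F \<Longrightarrow> W' \<in> libraries D F \<Longrightarrow> Z k W = Z k W' \<Longrightarrow>
           (\<forall>i\<in>k. Y i d k (X i d W) (V i W) = Y i d k (X i d W') (V i W')) \<Longrightarrow> W (d k) = W' (d k)"
  shows "\<exists>G. valid_scheme h r D F M N R1 R2 \<epsilon> V Z X Y G"
proof -
  let ?S = "libraries D F"
  define obs where "obs k d W = (\<lambda>i. if i \<in> k then Y i d k (X i d W) (V i W) else [])" for k d W
  define G where "G k d z y = (SOME w. \<exists>W\<in>?S. Z k W = z \<and> obs k d W = y \<and> w = W (d k))"
    for k d z y
  have correct: "G k d (Z k W) (obs k d W) = W (d k)"
    if d: "d \<in> demands h r D" and k: "k \<in> users h r" and W: "W \<in> ?S" for d k W
  proof -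
    have "\<exists>W'\<in>?S. Z k W' = Z k W \<and> obs k d W' = obs k d W \<and> G k d (Z k W) (obs k d W) = W' (d k)"
      unfolding G_def by (rule someI_ex) (use W in blast)
    then obtain W' where W': "W' \<in> ?S" "Z k W' = Z k W" "obs k d W' = obs k d W"
      and G: "G k d (Z k W) (obs k d W) = W' (d k)" by blast
    have "\<forall>i\<in>k. Y i d k (X i d W') (V i W') = Y i d k (X i d W) (V i W)"
    proof
      fix i assume "i \<in> k"
      with fun_cong[OF W'(3), of i] show "Y i d k (X i d W') (V i W') = Y i d k (X i d W) (V i W)"
        by (simp add: obs_def)
    qed
    then show ?thesis using decodable[OF d k W'(1) W W'(2)] G by simp
  qed
  have "unif_prob ?S (\<lambda>W. G k d (Z k W) (obs k d W) \<noteq> W (d k)) < \<epsilon>"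
    if "d \<in> demands h r D" "k \<in> users h r" for d k
  proof -
    have none: "{W \<in> ?S. G k d (Z k W) (obs k d W) \<noteq> W (d k)} = {}"
      using correct[OF that] by auto
    show ?thesis unfolding unif_prob_def none using assms(1) by simp
  qed
  then have "valid_scheme h r D F M N R1 R2 \<epsilon> V Z X Y G"
    unfolding valid_scheme_def using assms(2-5) by (simp flip: obs_def)
  then show ?thesis by blast
qed

lemma valid_scheme_of_message_counts:
  fixes V' :: "nat \<Rightarrow> (nat \<Rightarrow> bool list) \<Rightarrow> 'v"
    and Z' :: "nat set \<Rightarrow> (nat \<Rightarrow> bool list) \<Rightarrow> 'z"
    and X' :: "nat \<Rightarrow> (nat set \<Rightarrow> nat) \<Rightarrow> (nat \<Rightarrow> bool list) \<Rightarrow> 'x"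
    and Y' :: "nat \<Rightarrow> (nat set \<Rightarrow> nat) \<Rightarrow> nat set \<Rightarrow> (nat \<Rightarrow> bool list) \<Rightarrow> 'y"
    and \<phi> :: "nat \<Rightarrow> (nat set \<Rightarrow> nat) \<Rightarrow> nat set \<Rightarrow> 'x \<Rightarrow> 'v \<Rightarrow> 'y"
  assumes eps: "\<epsilon> > 0"
    and V1: "\<forall>j<h. card (V' j ` libraries D F) \<le> 2 ^ LV" and V2: "real LV \<le> N * real F"
    and Z1: "\<forall>k\<in>users h r. card (Z' k ` libraries D F) \<le> 2 ^ LZ" and Z2: "real LZ \<le> M * real F"
    and X1: "\<forall>d\<in>demands h r D. \<forall>i<h. card (X' i d ` libraries D F) \<le> 2 ^ LX"
    and X2: "real LX \<le> R1 * real F"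
    and Y1: "\<forall>d\<in>demands h r D. \<forall>k\<in>users h r. \<forall>i\<in>k. card (Y' i d k ` libraries D F) \<le> 2 ^ LY"
    and Y2: "real LY \<le> R2 * real F"
    and forward: "\<And>d i k W. Y' i d k W = \<phi> i d k (X' i d W) (V' i W)"
    and decodable: "\<And>d k W W'. d \<in> demands h r D \<Longrightarrow> k \<in> users h r \<Longrightarrow>
        W \<in> libraries D F \<Longrightarrow> W' \<in> libraries D F \<Longrightarrow> Z' k W = Z' k W' \<Longrightarrow>
        (\<forall>i\<in>k. Y' i d k W = Y' i d k W') \<Longrightarrow> W (d k) = W' (d k)"
  shows "\<exists>V Z X Y G. valid_scheme h r D F M N R1 R2 \<epsilon> V Z X Y G"
proof -
  let ?S = "libraries D F"
  define eV where "eV j = bit_encoding LV (V' j ` ?S)" for j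
  define eZ where "eZ k = bit_encoding LZ (Z' k ` ?S)" for k
  define eX where "eX i d = bit_encoding LX (X' i d ` ?S)" for i d
  define eY where "eY i d k = bit_encoding LY (Y' i d k ` ?S)" for i d k
  have fin: "finite (g ` ?S)" for g :: "_ \<Rightarrow> 'b" by (simp add: finite_libraries)
  have eV: "inj_on (eV j) (V' j ` ?S) \<and> (\<forall>a\<in>V' j ` ?S. length (eV j a) = LV)" if "j < h" for j
    unfolding eV_def using bit_encoding fin V1 that by blast
  have eZ: "inj_on (eZ k) (Z' k ` ?S)" if "k \<in> users h r" for k
    unfolding eZ_def using bit_encoding fin Z1 that by blast
  have eX: "inj_on (eX i d) (X' i d ` ?S) \<and> (\<forall>a\<in>X' i d ` ?S. length (eX i d a) = LX)"
    if "d \<in> demands h r D" "i < h" for i d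
    unfolding eX_def using bit_encoding fin X1 that by blast
  have eY: "inj_on (eY i d k) (Y' i d k ` ?S) \<and> (\<forall>a\<in>Y' i d k ` ?S. length (eY i d k a) = LY)"
    if "d \<in> demands h r D" "k \<in> users h r" "i \<in> k" for i d k
    unfolding eY_def using bit_encoding fin Y1 that by blast
  define V where "V j W = eV j (V' j W)" for j W
  define Z where "Z k W = eZ k (Z' k W)" for k W
  define X where "X i d W = eX i d (X' i d W)" for i d W
  \<comment> \<open>the relay decodes the server signal and its cache before forwarding\<close>
  define Y where "Y i d k x v =
      eY i d k (\<phi> i d k (inv_into (X' i d ` ?S) (eX i d) x) (inv_into (V' i ` ?S) (eV i) v))"
    for i d k x v
  have Y: "Y i d k (X i d W) (V i W) = eY i d k (Y' i d k W)"
    if "d \<in> demands h r D" "i < h" "W \<in> ?S" for i d k W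
    using eX[OF that(1,2)] eV[OF that(2)] that(3) by (simp add: Y_def X_def V_def forward)
  have "\<exists>G. valid_scheme h r D F M N R1 R2 \<epsilon> V Z X Y G"
  proof (rule valid_scheme_if_decodable[OF eps])
    show "\<forall>j<h. entropy_unif ?S (V j) \<le> N * real F"
      using entropy_unif_bit_encoding_le V1 V2 unfolding V_def eV_def by (blast intro: order.trans)
    show "\<forall>k\<in>users h r. entropy_unif ?S (Z k) \<le> M * real F"
      using entropy_unif_bit_encoding_le Z1 Z2 unfolding Z_def eZ_def by (blast intro: order.trans)
    show "\<forall>d\<in>demands h r D. \<forall>i<h. \<forall>W\<in>?S. real (length (X i d W)) \<le> R1 * real F"
      using eX X2 by (simp add: X_def)
    show "\<forall>d\<in>demands h r D. \<forall>k\<in>users h r. \<forall>i\<in>k. \<forall>W\<in>?S.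
        real (length (Y i d k (X i d W) (V i W))) \<le> R2 * real F"
      using Y eY Y2 by (simp add: users_def subset_iff)
  next
    fix d k W W'
    assume d: "d \<in> demands h r D" and k: "k \<in> users h r" and W: "W \<in> ?S" and W': "W' \<in> ?S"
      and "Z k W = Z k W'" and YW: "\<forall>i\<in>k. Y i d k (X i d W) (V i W) = Y i d k (X i d W') (V i W')"
    then have "Z' k W = Z' k W'" using eZ[OF k] by (simp add: Z_def inj_on_def)
    moreover have "\<forall>i\<in>k. Y' i d k W = Y' i d k W'"
    proof
      fix i assume i: "i \<in> k"
      then have "i < h" using k by (auto simp: users_def)
      then have "eY i d k (Y' i d k W) = eY i d k (Y' i d k W')"
        using YW i Y[OF d] W W' by metis
      then show "Y' i d k W = Y' i d k W'"
        using eY[OF d k i] W W' by (auto dest: inj_onD)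
    qed
    ultimately show "W (d k) = W' (d k)" by (rule decodable[OF d k W W'])
  qed
  then show ?thesis by blast
qed

section \<open>An integer polynomial code\<close>

definition chunk_bit :: "nat \<Rightarrow> bool list \<Rightarrow> nat \<Rightarrow> nat \<Rightarrow> bool" where
  "chunk_bit B w j q \<longleftrightarrow> j * B + q < length w \<and> w ! (j * B + q)"

definition chunk_value :: "nat \<Rightarrow> bool list \<Rightarrow> nat \<Rightarrow> nat" where
  "chunk_value B w j = (\<Sum>q<B. if chunk_bit B w j q then 2 ^ q else 0)"

definition coded_value :: "nat \<Rightarrow> nat \<Rightarrow> bool list \<Rightarrow> nat \<Rightarrow> nat" where
  "coded_value r B w i = (\<Sum>j<r. chunk_value B w j * i ^ j)"

definition coded_bit :: "nat \<Rightarrow> nat \<Rightarrow> bool list \<Rightarrow> nat \<Rightarrow> nat \<Rightarrow> bool" where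
  "coded_bit r B w i q \<longleftrightarrow> odd (coded_value r B w i div 2 ^ q)"

lemma binary_sum_less: "(\<Sum>q<B. if b q then 2 ^ q else 0::nat) < 2 ^ B"
  by (induction B) (auto split: if_splits)

lemma binary_sum_inj:
  "(\<Sum>q<B. if b q then 2 ^ q else 0::nat) = (\<Sum>q<B. if b' q then 2 ^ q else 0) \<Longrightarrow> \<forall>q<B. b q = b' q"
proof (induction B)
  case 0 then show ?case by simp
next
  case (Suc B)
  have eq: "(\<Sum>q<B. if b q then 2 ^ q else 0::nat) + (if b B then 2 ^ B else 0)
     = (\<Sum>q<B. if b' q then 2 ^ q else 0) + (if b' B then 2 ^ B else 0)"
    using Suc.prems by simp
  have bB: "b B = b' B"
    using eq binary_sum_less[where b=b and B=B] binary_sum_less[where b=b' and B=B] by (cases "b B"; cases "b' B") auto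
  then have "\<forall>q<B. b q = b' q" using eq by (intro Suc.IH) simp
  then show ?case using bB less_Suc_eq by auto
qed

lemma nat_eq_if_low_bits_eq:
  "(v::nat) < 2 ^ S \<Longrightarrow> v' < 2 ^ S \<Longrightarrow> (\<forall>q<S. odd (v div 2 ^ q) = odd (v' div 2 ^ q)) \<Longrightarrow> v = v'"
proof (induction S arbitrary: v v')
  case 0 then show ?case by simp
next
  case (Suc S)
  have "v mod 2 = v' mod 2" using Suc.prems(3) by (auto simp: odd_iff_mod_2_eq_one)
  moreover have "v div 2 = v' div 2"
    using Suc.prems by (intro Suc.IH) (auto simp: div_mult2_eq[symmetric])
  ultimately show ?case by (metis div_mult_mod_eq)
qed

lemma coded_value_less:
  assumes "i < h"
  shows "coded_value r B w i < 2 ^ (B + r + h * r)"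
proof -
  have term_le: "chunk_value B w j * i ^ j \<le> 2 ^ B * h ^ r" if "j < r" for j
  proof (rule mult_mono)
    show "chunk_value B w j \<le> 2 ^ B"
      using binary_sum_less unfolding chunk_value_def by (metis less_imp_le)
    have "i ^ j \<le> h ^ j" using assms by (simp add: power_mono)
    also have "\<dots> \<le> h ^ r" using assms that by (intro power_increasing) auto
    finally show "i ^ j \<le> h ^ r" .
  qed auto
  have "coded_value r B w i \<le> r * (2 ^ B * h ^ r)"
    unfolding coded_value_def using sum_mono[of "{..<r}", OF term_le] by simp
  also have "\<dots> < 2 ^ r * (2 ^ B * 2 ^ (h * r))"
  proof -
    have "h ^ r \<le> (2 ^ h) ^ r" by (rule power_mono) (auto simp: less_imp_le)
    then have "h ^ r \<le> 2 ^ (h * r)" by (simp add: power_mult)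
    then show ?thesis using assms by (intro mult_less_le_imp_less mult_left_mono) auto
  qed
  also have "\<dots> = 2 ^ (B + r + h * r)" by (simp add: power_add)
  finally show ?thesis .
qed

text \<open>Two polynomials of degree below r that agree at r points are equal.\<close>

lemma chunk_values_eq_if_coded_values_eq:
  assumes "card k = r" and eq: "\<forall>i\<in>k. coded_value r B w i = coded_value r B w' i"
  shows "\<forall>j<r. chunk_value B w j = chunk_value B w' j"
proof -
  define a where "a j = int (chunk_value B w j) - int (chunk_value B w' j)" for j
  define p :: "int poly" where "p = (\<Sum>j<r. monom (a j) j)"
  have roots: "int ` k \<subseteq> {x. poly p x = 0}"
  proof
    fix x assume "x \<in> int ` k"
    then obtain i where i: "i \<in> k" "x = int i" by auto
    have "poly p x = int (coded_value r B w i) - int (coded_value r B w' i)"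
      by (simp add: p_def poly_sum poly_monom a_def coded_value_def i(2) sum_subtractf
          left_diff_distrib)
    then show "x \<in> {x. poly p x = 0}" using eq i(1) by simp
  qed
  have "p = 0"
  proof (rule ccontr)
    assume p: "p \<noteq> 0"
    then have "0 < r" by (rule contrapos_np) (simp add: p_def)
    have "r = card (int ` k)" using assms(1) by (simp add: card_image)
    also have "\<dots> \<le> card {x. poly p x = 0}" by (rule card_mono[OF poly_roots_finite[OF p] roots])
    also have "\<dots> \<le> degree p" by (rule card_poly_roots_bound[OF p])
    also have "degree p \<le> r - 1" unfolding p_def
      by (rule degree_sum_le) (auto intro: order.trans[OF degree_monom_le])
    finally show False using \<open>0 < r\<close> by simp
  qed
  have "a j = 0" if "j < r" for j
  proof -
    have "coeff p j = (\<Sum>j'<r. if j' = j then a j' else 0)"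
      by (simp add: p_def coeff_sum coeff_monom)
    then show ?thesis using \<open>p = 0\<close> that by simp
  qed
  then show ?thesis by (simp add: a_def)
qed

lemma list_eq_if_coded_bits_eq:
  assumes len: "length w = length w'" "length w \<le> r * B"
    and k: "k \<subseteq> {..<h}" "card k = r"
    and eq: "\<forall>i\<in>k. \<forall>q < B + r + h * r. coded_bit r B w i q = coded_bit r B w' i q"
  shows "w = w'"
proof (rule nth_equalityI)
  have "\<forall>i\<in>k. coded_value r B w i = coded_value r B w' i"
  proof
    fix i assume "i \<in> k"
    then have "i < h" using k(1) by auto
    show "coded_value r B w i = coded_value r B w' i"
      by (rule nat_eq_if_low_bits_eq[OF coded_value_less[OF \<open>i < h\<close>] coded_value_less[OF \<open>i < h\<close>]])
        (use eq \<open>i \<in> k\<close> in \<open>simp add: coded_bit_def\<close>)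
  qed
  then have chunks: "\<forall>j<r. chunk_value B w j = chunk_value B w' j"
    by (rule chunk_values_eq_if_coded_values_eq[OF k(2)])
  show "length w = length w'" by (rule len(1))
  fix p assume p: "p < length w"
  then have "0 < B" using len(2) by (cases B) auto
  define j where "j = p div B"
  define q where "q = p mod B"
  have pj: "p = j * B + q" by (simp add: j_def q_def)
  have "q < B" using \<open>0 < B\<close> by (simp add: q_def)
  have "j < r"
  proof (rule ccontr)
    assume "\<not> j < r"
    then have "r * B \<le> j * B" by simp
    then show False using pj len(2) p by linarith
  qed
  have "\<forall>q<B. chunk_bit B w j q = chunk_bit B w' j q"
    by (rule binary_sum_inj) (use chunks \<open>j < r\<close> in \<open>simp add: chunk_value_def\<close>)
  then have "chunk_bit B w j q = chunk_bit B w' j q" using \<open>q < B\<close> by blast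
  then show "w ! p = w' ! p" using \<open>q < B\<close> p len(1) by (simp add: chunk_bit_def pj)
qed

section \<open>Counting subsets\<close>

lemma sum_Pow_card:
  fixes f :: "nat \<Rightarrow> real"
  assumes U: "finite U"
  shows "(\<Sum>T\<in>Pow U. f (card T)) = (\<Sum>t\<le>card U. real (card U choose t) * f t)"
proof -
  have P: "Pow U = (\<Union>t\<in>{..card U}. {T. T \<subseteq> U \<and> card T = t})"
    using U by (auto intro: card_mono)
  have "(\<Sum>T\<in>Pow U. f (card T)) = (\<Sum>t\<le>card U. (\<Sum>T\<in>{T. T \<subseteq> U \<and> card T = t}. f (card T)))"
    unfolding P
    by (rule sum.UNION_disjoint) (use U in \<open>auto intro: finite_subset[of _ "Pow U"]\<close>)
  also have "\<dots> = (\<Sum>t\<le>card U. real (card U choose t) * f t)"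
  proof (rule sum.cong[OF refl])
    fix t
    have "(\<Sum>T\<in>{T. T \<subseteq> U \<and> card T = t}. f (card T)) = (\<Sum>T\<in>{T. T \<subseteq> U \<and> card T = t}. f t)"
      by (rule sum.cong) auto
    also have "\<dots> = real (card {T. T \<subseteq> U \<and> card T = t}) * f t" by simp
    also have "\<dots> = real (card U choose t) * f t" using n_subsets[OF U] by simp
    finally show "(\<Sum>T\<in>{T. T \<subseteq> U \<and> card T = t}. f (card T)) = real (card U choose t) * f t" .
  qed
  finally show ?thesis .
qed

lemma sum_Pow_Diff_card:
  fixes f :: "nat \<Rightarrow> real"
  assumes U: "finite U" and k: "k \<in> U"
  shows "(\<Sum>T\<in>Pow (U - {k}). f (card T)) =
         (\<Sum>t\<le>card U. real (card U choose t) * (real (card U) - real t) / real (card U) * f t)"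
proof -
  define K where "K = card U"
  have K1: "K = Suc (K - 1)" proof -
    have "card U > 0" using U k card_gt_0_iff by blast
    then show ?thesis by (simp add: K_def)
  qed
  have cU: "card (U - {k}) = K - 1" using U k by (simp add: K_def)
  have "(\<Sum>T\<in>Pow (U - {k}). f (card T)) = (\<Sum>t\<le>K - 1. real ((K - 1) choose t) * f t)"
    using sum_Pow_card[of "U - {k}" f] U cU by simp
  also have "\<dots> = (\<Sum>t\<le>K. real (K choose t) * (real K - real t) / real K * f t)"
  proof -
    have "(\<Sum>t\<le>K. real (K choose t) * (real K - real t) / real K * f t)
        = (\<Sum>t\<le>Suc (K - 1). real (K choose t) * (real K - real t) / real K * f t)" using K1 by simp
    also have "\<dots> = (\<Sum>t\<le>K - 1. real (K choose t) * (real K - real t) / real K * f t)"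
      using K1 by (subst sum.atMost_Suc) simp
    also have "\<dots> = (\<Sum>t\<le>K - 1. real ((K - 1) choose t) * f t)"
    proof (rule sum.cong[OF refl])
      fix t assume t: "t \<in> {..K - 1}"
      have "(K - t) * (K choose t) = K * ((K - 1) choose t)" by (rule binomial_absorb_comp)
      then have "real (K choose t) * (real K - real t) = real K * real ((K - 1) choose t)"
        using t K1 by (metis of_nat_diff of_nat_mult mult.commute atMost_iff le_SucI)
      moreover have "real K > 0" using K1 by linarith
      ultimately show "real (K choose t) * (real K - real t) / real K * f t = real ((K - 1) choose t) * f t"
        by (simp add: field_simps)
    qed
    finally show ?thesis by simp
  qed
  finally show ?thesis by (simp add: K_def)
qed

lemma sum_Pow_card_mem:
  fixes f :: "nat \<Rightarrow> real"
  assumes U: "finite U" and k: "k \<in> U"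
  shows "(\<Sum>T\<in>{T\<in>Pow U. k \<in> T}. f (card T)) =
         (\<Sum>t\<le>card U. real (card U choose t) * real t / real (card U) * f t)"
proof -
  have "card U > 0" using U k card_gt_0_iff by blast
  have "(\<Sum>T\<in>Pow U. f (card T)) =
      (\<Sum>T\<in>{T\<in>Pow U. k \<in> T} \<union> Pow (U - {k}). f (card T))"
    by (rule sum.cong) auto
  also have "\<dots> = (\<Sum>T\<in>{T\<in>Pow U. k \<in> T}. f (card T)) + (\<Sum>T\<in>Pow (U - {k}). f (card T))"
    by (rule sum.union_disjoint) (use U in auto)
  finally have "(\<Sum>T\<in>Pow U. f (card T)) =
      (\<Sum>T\<in>{T\<in>Pow U. k \<in> T}. f (card T)) + (\<Sum>T\<in>Pow (U - {k}). f (card T))" .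
  moreover have "(\<Sum>t\<le>card U. real (card U choose t) * f t) -
      (\<Sum>t\<le>card U. real (card U choose t) * (real (card U) - real t) / real (card U) * f t) =
      (\<Sum>t\<le>card U. real (card U choose t) * real t / real (card U) * f t)"
    unfolding sum_subtractf[symmetric]
    by (rule sum.cong[OF refl]) (use \<open>card U > 0\<close> in \<open>simp add: field_simps\<close>)
  ultimately show ?thesis using sum_Pow_card[OF U, of f] sum_Pow_Diff_card[OF U k, of f] by linarith
qed

lemma sum_Pow_nonempty_card_pred:
  fixes f :: "nat \<Rightarrow> real"
  assumes U: "finite U" and K1: "card U \<ge> 1"
  shows "(\<Sum>T\<in>Pow U - {{}}. f (card T - 1)) =
         (\<Sum>t\<le>card U. real (card U choose t) * (real (card U) - real t) / (real t + 1) * f t)"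
proof -
  define K where "K = card U"
  define g where "g t = (if t = 0 then 0 else f (t - 1))" for t
  have KS: "K = Suc (K - 1)" using K1 by (simp add: K_def)
  have "(\<Sum>T\<in>Pow U - {{}}. f (card T - 1)) = (\<Sum>T\<in>Pow U - {{}}. g (card T))"
    by (rule sum.cong[OF refl]) (metis DiffE PowD U card_0_eq finite_subset g_def insertCI)
  also have "\<dots> = (\<Sum>T\<in>Pow U. g (card T))"
    by (rule sum.mono_neutral_left) (use U in \<open>auto simp: g_def\<close>)
  also have "\<dots> = (\<Sum>t\<le>K. real (K choose t) * g t)" using sum_Pow_card[OF U, of g] by (simp add: K_def)
  also have "\<dots> = (\<Sum>s\<le>K - 1. real (K choose Suc s) * f s)"
    using KS by (metis (no_types, lifting) sum.atMost_Suc_shift diff_Suc_1 g_def mult_zero_right add_0 nat.simps(3) sum.cong)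
  also have "\<dots> = (\<Sum>t\<le>K. real (K choose t) * (real K - real t) / (real t + 1) * f t)"
  proof -
    have "(\<Sum>t\<le>K. real (K choose t) * (real K - real t) / (real t + 1) * f t)
        = (\<Sum>t\<le>Suc (K - 1). real (K choose t) * (real K - real t) / (real t + 1) * f t)" using KS by simp
    also have "\<dots> = (\<Sum>t\<le>K - 1. real (K choose t) * (real K - real t) / (real t + 1) * f t)"
      using KS by (subst sum.atMost_Suc) simp
    also have "\<dots> = (\<Sum>s\<le>K - 1. real (K choose Suc s) * f s)"
    proof (rule sum.cong[OF refl])
      fix t assume t: "t \<in> {..K - 1}"
      have a1: "Suc t * (K choose Suc t) = K * ((K - 1) choose t)" by (rule binomial_absorption)
      have a2: "(K - t) * (K choose t) = K * ((K - 1) choose t)" by (rule binomial_absorb_comp)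
      have "real (Suc t) * real (K choose Suc t) = (real K - real t) * real (K choose t)"
        using a1 a2 t KS by (metis of_nat_diff of_nat_mult atMost_iff le_SucI)
      then have "real (K choose Suc t) = (real K - real t) * real (K choose t) / real (Suc t)"
        by (simp add: eq_divide_eq mult.commute)
      then show "real (K choose t) * (real K - real t) / (real t + 1) * f t = real (K choose Suc t) * f t"
        by (simp add: mult.commute)
    qed
    finally show ?thesis by simp
  qed
  finally show ?thesis by (simp add: K_def)
qed

lemma card_users_mem:
  assumes "i < h" "1 \<le> r"
  shows "card {k \<in> users h r. i \<in> k} = (h - 1) choose (r - 1)"
proof -
  let ?A = "{A. A \<subseteq> {..<h} - {i} \<and> card A = r - 1}"
  have fin: "finite ({..<h} - {i})" by simp
  have "{k \<in> users h r. i \<in> k} = insert i ` ?A"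
  proof
    show "{k \<in> users h r. i \<in> k} \<subseteq> insert i ` ?A"
    proof
      fix k assume k: "k \<in> {k \<in> users h r. i \<in> k}"
      then have fk: "finite k" by (auto simp: users_def intro: finite_subset)
      have "k = insert i (k - {i})" using k by auto
      moreover have "k - {i} \<in> ?A" using k fk by (auto simp: users_def)
      ultimately show "k \<in> insert i ` ?A" by blast
    qed
    show "insert i ` ?A \<subseteq> {k \<in> users h r. i \<in> k}"
    proof
      fix k assume "k \<in> insert i ` ?A"
      then obtain A where A: "A \<in> ?A" "k = insert i A" by blast
      have "finite A" using A(1) by (auto intro: finite_subset[OF _ fin])
      moreover have "i \<notin> A" using A(1) by auto
      ultimately have "card k = r" using A assms(2) by auto
      then show "k \<in> {k \<in> users h r. i \<in> k}" using A assms(1) by (auto simp: users_def)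
    qed
  qed
  moreover have "inj_on (insert i) ?A"
    by (rule inj_onI) (metis Diff_insert_absorb mem_Collect_eq subset_Diff_insert)
  ultimately have "card {k \<in> users h r. i \<in> k} = card ?A" by (simp add: card_image)
  also have "\<dots> = (h - 1) choose (r - 1)" using n_subsets[OF fin, of "r - 1"] assms(1) by simp
  finally show ?thesis .
qed

lemma users_memD: "k \<in> users h r \<Longrightarrow> finite k \<and> card k = r \<and> k \<subseteq> {..<h}"
  by (auto simp: users_def intro: finite_subset)

lemma demands_memD: "d \<in> demands h r D \<Longrightarrow> u \<in> users h r \<Longrightarrow> d u \<in> {1..D}"
  by (auto simp: demands_def)

lemma finite_users: "finite (users h r)"
proof -
  have "users h r \<subseteq> Pow {..<h}" by (auto simp: users_def)
  then show ?thesis by (rule finite_subset) simp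
qed

lemma odd_card_filter_cancel:
  assumes "finite S" "k \<in> S" "\<forall>u\<in>S - {k}. g u = g' u"
    and "odd (card {u\<in>S. g u}) = odd (card {u\<in>S. g' u})"
  shows "g k = g' k"
proof -
  have e: "card {u\<in>S. g u} = card {u\<in>S - {k}. g u} + (if g k then 1 else 0)" for g
  proof -
    have "{u\<in>S. g u} = {u\<in>S - {k}. g u} \<union> (if g k then {k} else {})" using assms(2) by auto
    then show ?thesis using assms(1) by (auto simp: card_insert_if)
  qed
  have "{u\<in>S - {k}. g u} = {u\<in>S - {k}. g' u}" using assms(3) by auto
  then show ?thesis using assms(4) e[of g] e[of g'] by (auto split: if_splits)
qed

lemma card_UN_image_lessThan_le:
  assumes "finite I"
  shows "card (\<Union>x\<in>I. f x ` {..<n x}) \<le> (\<Sum>x\<in>I. n x)"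
proof -
  have "card (\<Union>x\<in>I. f x ` {..<n x}) \<le> (\<Sum>x\<in>I. card (f x ` {..<n x}))"
    by (rule card_UN_le[OF assms])
  also have "\<dots> \<le> (\<Sum>x\<in>I. n x)"
    by (rule sum_mono) (metis card_image_le card_lessThan finite_lessThan)
  finally show ?thesis .
qed

lemma card_image_restrict_le:
  fixes g :: "'w \<Rightarrow> 'a \<Rightarrow> bool"
  assumes "finite E" "\<And>W. f W = restrict (g W) E"
  shows "card (f ` S) \<le> 2 ^ card E"
proof -
  have "f ` S \<subseteq> PiE E (\<lambda>_. UNIV :: bool set)" using assms(2) by auto
  moreover have "finite (PiE E (\<lambda>_. UNIV :: bool set))" using assms(1) by (simp add: finite_PiE)
  ultimately have "card (f ` S) \<le> card (PiE E (\<lambda>_. UNIV :: bool set))" by (rule card_mono[rotated])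
  also have "\<dots> = 2 ^ card E" using assms(1) by (simp add: card_PiE)
  finally show ?thesis .
qed

lemma card_image_restrict_le_floor:
  fixes g :: "'w \<Rightarrow> 'a \<Rightarrow> bool"
  assumes "finite E" "\<And>W. f W = restrict (g W) E" "real (card E) \<le> x"
  shows "card (f ` S) \<le> 2 ^ nat \<lfloor>x\<rfloor>"
proof -
  have "card (f ` S) \<le> 2 ^ card E" by (rule card_image_restrict_le[OF assms(1,2)])
  also have "\<dots> \<le> 2 ^ nat \<lfloor>x\<rfloor>" using le_nat_floor[OF assms(3)] by (intro power_increasing) auto
  finally show ?thesis .
qed

section \<open>The scheme\<close>

definition mixed_memory :: "nat \<Rightarrow> nat \<Rightarrow> nat \<Rightarrow> real \<Rightarrow> real \<Rightarrow> (nat \<Rightarrow> real) \<Rightarrow> real" where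
  "mixed_memory r D K N a \<mu> =
     a * N * real r + (real D - N * real r) * (\<Sum>t\<le>K. \<mu> t * real t / real K)"

definition mixed_rate1 :: "nat \<Rightarrow> nat \<Rightarrow> nat \<Rightarrow> real \<Rightarrow> (nat \<Rightarrow> real) \<Rightarrow> real" where
  "mixed_rate1 r D K N \<mu> =
     (1 - N * real r / real D) / real r * (\<Sum>t\<le>K. \<mu> t * (real K - real t) / (real t + 1))"

text \<open>Positions of relay i's coded piece of a file are labelled by segments:
  \<open>Shared q\<close> is cached at the relay and at all its users, \<open>RelayOnly q\<close> only at the relay,
  and \<open>Subfile T q\<close> at the users in T (a subset of the users of relay i).
  The server sends relay i the symbols \<open>Xor S q\<close>, the XOR over u \<in> S of the bit
  \<open>Subfile (S - {u}) q\<close> of the file demanded by u, and \<open>Plain u q\<close>, the uncovered bit at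
  position q of the piece demanded by u.\<close>

datatype segment = Shared nat | RelayOnly nat | Subfile "nat set set" nat
datatype symbol = Xor "nat set set" nat | Plain "nat set" nat

locale combination_scheme =
  fixes h r D :: nat and N a :: real and \<mu> :: "nat \<Rightarrow> real" and F :: nat
  assumes r1: "1 \<le> r" and rh: "r < h" and D1: "1 \<le> D" and N0: "0 \<le> N" and ND: "N * real r \<le> real D"
    and a0: "0 \<le> a" and a1: "a \<le> 1" and mu0: "\<And>t. 0 \<le> \<mu> t"
    and mu1: "(\<Sum>t\<le>(h - 1) choose (r - 1). \<mu> t) = 1"
begin

text \<open>A file of F bits is split into r chunks of B = \<lceil>F / r\<rceil> bits, so a coded piece has
  S = B + r + h r bits.  Within the first S0 = F div r of its positions, sR \<approx> \<rho> S0 segments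
  are cached at the relay (sA \<approx> a \<rho> S0 of them also at the users) and m t \<approx>
  \<mu> t (1 - \<rho>) S0 / (Kh choose t) segments go to each t-subset of users; the leftover
  positions, at most c0 many, are sent uncoded.\<close>

definition "Kh = (h - 1) choose (r - 1)"
definition "rho = N * real r / real D"
definition "B = (F + r - 1) div r"
definition "S = B + r + h * r"
definition "S0 = F div r"
definition "sR = nat \<lfloor>rho * real S0\<rfloor>"
definition "sA = nat \<lfloor>a * rho * real S0\<rfloor>"
definition "m t = nat \<lfloor>\<mu> t * (1 - rho) * real S0 / real (Kh choose t)\<rfloor>"
definition "relay_users i = {k \<in> users h r. i \<in> k}"
definition "relay_segs = Shared ` {..<sA} \<union> RelayOnly ` {..<sR - sA}"
definition "subfile_segs i = (\<Union>T\<in>Pow (relay_users i). Subfile T ` {..<m (card T)})"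
definition "placed i = relay_segs \<union> subfile_segs i"
definition "pos i = (SOME f. inj_on f (placed i) \<and> f ` placed i \<subseteq> {..<S})"
definition "leftover i = {..<S} - pos i ` placed i"
definition "cbit W n i q = coded_bit r B (W n) i q"
definition "user_segs i k =
  Shared ` {..<sA} \<union> (\<Union>T\<in>{T\<in>Pow (relay_users i). k \<in> T}. Subfile T ` {..<m (card T)})"
definition "relay_cache_idx = {1..D} \<times> relay_segs"
definition "relay_cache i W = restrict (\<lambda>(n, s). cbit W n i (pos i s)) relay_cache_idx"
definition "user_cache_idx k = (SIGMA i:k. {1..D} \<times> user_segs i k)"
definition "user_cache k W = restrict (\<lambda>(i, n, s). cbit W n i (pos i s)) (user_cache_idx k)"
definition "server_idx i =
  (\<Union>S'\<in>Pow (relay_users i) - {{}}. Xor S' ` {..<m (card S' - 1)}) \<union>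
  (\<Union>u\<in>relay_users i. Plain u ` leftover i)"
definition "server_bit i d W e =
  (case e of
     Xor S' q \<Rightarrow> odd (card {u\<in>S'. cbit W (d u) i (pos i (Subfile (S' - {u}) q))})
   | Plain u q \<Rightarrow> cbit W (d u) i q)"
definition "server_signal i d W = restrict (server_bit i d W) (server_idx i)"
definition "relay_signal_idx i d k =
  Inl ` ((\<Union>T\<in>Pow (relay_users i - {k}). Xor (insert k T) ` {..<m (card T)}) \<union> Plain k ` leftover i)
  \<union> Inr ` ({d k} \<times> RelayOnly ` {..<sR - sA})"
definition "forward i d k x v =
  restrict (\<lambda>e. case e of Inl c \<Rightarrow> x c | Inr c \<Rightarrow> v c) (relay_signal_idx i d k)"
definition "relay_signal i d k W = forward i d k (server_signal i d W) (relay_cache i W)"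

definition "cache_frac = (\<Sum>t\<le>Kh. \<mu> t * real t / real Kh)"
definition "Mem = D * (a * rho + (1 - rho) * cache_frac)"
definition "Rate1 = (1 - rho) / real r * (\<Sum>t\<le>Kh. \<mu> t * (real Kh - real t) / (real t + 1))"
definition "Rate2 = (1 - Mem / real D) / real r"
definition "c0 = r + h * r + 2 + 2 ^ Kh"

lemma Kh_ge_1: "Kh \<ge> 1" unfolding Kh_def using zero_less_binomial[of "r - 1" "h - 1"] r1 rh by linarith
lemma rho_nonneg: "0 \<le> rho" using N0 D1 by (simp add: rho_def)
lemma rho_le_1: "rho \<le> 1" using ND D1 by (simp add: rho_def)
lemma finite_relay_users: "finite (relay_users i)" using finite_users by (simp add: relay_users_def)
lemma card_relay_users: "i < h \<Longrightarrow> card (relay_users i) = Kh"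
  using card_users_mem[of i h r] r1 by (simp add: relay_users_def Kh_def)

lemma choose_mult_m_le: "t \<le> Kh \<Longrightarrow> real (Kh choose t) * real (m t) \<le> \<mu> t * (1 - rho) * real S0"
proof -
  assume t: "t \<le> Kh"
  have C: "real (Kh choose t) > 0" using t by simp
  have x0: "0 \<le> \<mu> t * (1 - rho) * real S0 / real (Kh choose t)" using mu0[of t] rho_le_1 C by simp
  have "real (m t) \<le> \<mu> t * (1 - rho) * real S0 / real (Kh choose t)"
    unfolding m_def using x0 by linarith
  then show ?thesis using C by (simp add: field_simps)
qed

lemma choose_mult_m_ge: "t \<le> Kh \<Longrightarrow> real (Kh choose t) * real (m t) \<ge> \<mu> t * (1 - rho) * real S0 - real (Kh choose t)"
proof -
  assume t: "t \<le> Kh"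
  have C: "real (Kh choose t) > 0" using t by simp
  have x0: "0 \<le> \<mu> t * (1 - rho) * real S0 / real (Kh choose t)" using mu0[of t] rho_le_1 C by simp
  have "real (m t) \<ge> \<mu> t * (1 - rho) * real S0 / real (Kh choose t) - 1"
    unfolding m_def using x0 by linarith
  then show ?thesis using C by (simp add: field_simps)
qed

lemma sA_le_sR: "sA \<le> sR"
proof -
  have "a * rho * real S0 \<le> rho * real S0" using mult_right_mono[OF mult_right_mono[OF a1 rho_nonneg], of "real S0"] by simp
  then show ?thesis unfolding sA_def sR_def by (intro nat_mono floor_mono)
qed

lemma sR_upper: "real sR \<le> rho * real S0" using rho_nonneg by (simp add: sR_def)
lemma sR_lower: "real sR \<ge> rho * real S0 - 1" using rho_nonneg unfolding sR_def by linarith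
lemma sA_upper: "real sA \<le> a * rho * real S0" using rho_nonneg a0 by (simp add: sA_def)
lemma sA_lower: "real sA \<ge> a * rho * real S0 - 1" using rho_nonneg a0 unfolding sA_def by linarith

lemma card_relay_segs: "card relay_segs = sR"
proof -
  have "card relay_segs = card (Shared ` {..<sA}) + card (RelayOnly ` {..<sR - sA})"
    unfolding relay_segs_def by (rule card_Un_disjoint) auto
  also have "\<dots> = sA + (sR - sA)" by (simp add: card_image inj_on_def)
  finally show ?thesis using sA_le_sR by simp
qed

lemma finite_relay_segs: "finite relay_segs" by (simp add: relay_segs_def)

lemma card_subfile_segs: "card (subfile_segs i) = (\<Sum>T\<in>Pow (relay_users i). m (card T))"
proof -
  have "card (subfile_segs i) = (\<Sum>T\<in>Pow (relay_users i). card ((\<lambda>q. Subfile T q) ` {..<m (card T)}))"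
    unfolding subfile_segs_def by (rule card_UN_disjoint) (use finite_relay_users in auto)
  also have "\<dots> = (\<Sum>T\<in>Pow (relay_users i). m (card T))" by (simp add: card_image inj_on_def)
  finally show ?thesis .
qed

lemma finite_subfile_segs: "finite (subfile_segs i)" unfolding subfile_segs_def using finite_relay_users by (intro finite_UN_I) auto

lemma card_placed: "card (placed i) = sR + (\<Sum>T\<in>Pow (relay_users i). m (card T))"
proof -
  have "card (placed i) = card relay_segs + card (subfile_segs i)"
  proof -
    have "relay_segs \<inter> subfile_segs i = {}" by (auto simp: relay_segs_def subfile_segs_def)
    then show ?thesis unfolding placed_def by (intro card_Un_disjoint finite_relay_segs finite_subfile_segs)
  qed
  then show ?thesis by (simp add: card_relay_segs card_subfile_segs)
qed

lemma sum_subfile_lengths: assumes "i < h" shows "real (\<Sum>T\<in>Pow (relay_users i). m (card T)) = (\<Sum>t\<le>Kh. real (Kh choose t) * real (m t))"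
  using sum_Pow_card[where f="\<lambda>t. real (m t)" and U="relay_users i", OF finite_relay_users] card_relay_users[OF assms] by (simp add: of_nat_sum)

lemma S0_le: "real r * real S0 \<le> real F"
proof -
  have "r * (F div r) \<le> F" by simp
  then show ?thesis unfolding S0_def by (metis of_nat_le_iff of_nat_mult)
qed

lemma card_placed_le: "i < h \<Longrightarrow> real (card (placed i)) \<le> real S0"
proof -
  assume i: "i < h"
  have "real (card (placed i)) = real sR + (\<Sum>t\<le>Kh. real (Kh choose t) * real (m t))"
    by (simp only: card_placed of_nat_add sum_subfile_lengths[OF i])
  also have "\<dots> \<le> rho * real S0 + (\<Sum>t\<le>Kh. \<mu> t * (1 - rho) * real S0)"
    by (intro add_mono sR_upper sum_mono choose_mult_m_le) auto
  also have "(\<Sum>t\<le>Kh. \<mu> t * (1 - rho) * real S0) = (1 - rho) * real S0"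
    using mu1 by (simp add: sum_distrib_right[symmetric] Kh_def)
  finally show ?thesis by (simp add: algebra_simps)
qed

lemma S_ge: "S0 \<le> S"
proof -
  have "F \<le> F + r - 1" using r1 by simp
  then have "F div r \<le> (F + r - 1) div r" by (rule div_le_mono)
  then show ?thesis by (simp add: S_def S0_def B_def)
qed

lemma pos: "i < h \<Longrightarrow> inj_on (pos i) (placed i) \<and> pos i ` placed i \<subseteq> {..<S}"
proof -
  assume i: "i < h"
  have "card (placed i) \<le> card {..<S}" using card_placed_le[OF i] S_ge by simp
  then obtain f where "f ` placed i \<subseteq> {..<S}" "inj_on f (placed i)"
    using card_le_inj[of "placed i" "{..<S}"] finite_relay_segs finite_subfile_segs by (auto simp: placed_def)
  then have "\<exists>f. inj_on f (placed i) \<and> f ` placed i \<subseteq> {..<S}" by blast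
  from someI_ex[OF this] show ?thesis unfolding pos_def .
qed

lemma card_leftover_le: "i < h \<Longrightarrow> real (card (leftover i)) \<le> real c0"
proof -
  assume i: "i < h"
  have sub: "pos i ` placed i \<subseteq> {..<S}" using pos[OF i] by blast
  have "card (leftover i) = S - card (pos i ` placed i)" unfolding leftover_def
    by (subst card_Diff_subset) (use sub finite_relay_segs finite_subfile_segs in \<open>auto simp: placed_def intro: finite_subset\<close>)
  also have "card (pos i ` placed i) = card (placed i)" using pos[OF i] by (simp add: card_image)
  finally have cl: "card (leftover i) = S - card (placed i)" .
  have low: "real (card (placed i)) \<ge> real S0 - 1 - 2 ^ Kh"
  proof -
    have "real (card (placed i)) = real sR + (\<Sum>t\<le>Kh. real (Kh choose t) * real (m t))"
      by (simp only: card_placed of_nat_add sum_subfile_lengths[OF i])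
    also have "\<dots> \<ge> (rho * real S0 - 1) + (\<Sum>t\<le>Kh. \<mu> t * (1 - rho) * real S0 - real (Kh choose t))"
      by (intro add_mono sR_lower sum_mono choose_mult_m_ge) auto
    finally have "real (card (placed i)) \<ge> rho * real S0 - 1 + ((1 - rho) * real S0 - real (\<Sum>t\<le>Kh. Kh choose t))"
      using mu1 by (simp add: sum_subtractf sum_distrib_right[symmetric] Kh_def)
    then show ?thesis by (simp add: choose_row_sum algebra_simps)
  qed
  have "B \<le> S0 + 1"
  proof -
    have "(F + r - 1) div r \<le> (F + r) div r" by (simp add: div_le_mono)
    also have "(F + r) div r = F div r + 1" using r1 by simp
    finally show ?thesis by (simp add: B_def S0_def)
  qed
  then have "real S \<le> real S0 + 1 + real r + real h * real r" by (simp add: S_def)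
  moreover have "real (card (placed i)) \<le> real S" using card_placed_le[OF i] S_ge
    by (meson of_nat_le_iff order_trans)
  ultimately show ?thesis using cl low by (simp add: c0_def of_nat_diff)
qed


lemma cache_frac_nonneg: "0 \<le> cache_frac" unfolding cache_frac_def using mu0 by (intro sum_nonneg) auto
lemma cache_frac_le_1: "cache_frac \<le> 1"
proof -
  have "cache_frac \<le> (\<Sum>t\<le>Kh. \<mu> t)" unfolding cache_frac_def
  proof (rule sum_mono)
    fix t assume "t \<in> {..Kh}"
    then have "real t / real Kh \<le> 1" using Kh_ge_1 by simp
    then show "\<mu> t * real t / real Kh \<le> \<mu> t" using mu0[of t]
      by (metis mult_left_le times_divide_eq_right)
  qed
  then show ?thesis using mu1 by (simp add: Kh_def)
qed

lemma Mem_eq_mixed_memory: "Mem = mixed_memory r D Kh N a \<mu>"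
  using D1 by (simp add: Mem_def rho_def cache_frac_def mixed_memory_def algebra_simps)

lemma Rate1_eq_mixed_rate1: "Rate1 = mixed_rate1 r D Kh N \<mu>"
  by (simp add: Rate1_def rho_def mixed_rate1_def)

lemma Mem_nonneg: "0 \<le> Mem" unfolding Mem_def using a0 rho_nonneg rho_le_1 cache_frac_nonneg by (intro mult_nonneg_nonneg add_nonneg_nonneg) auto

lemma Mem_le: "Mem \<le> real D"
proof -
  have "a * rho + (1 - rho) * cache_frac \<le> rho + (1 - rho)"
    using a0 a1 rho_nonneg rho_le_1 cache_frac_le_1 cache_frac_nonneg by (intro add_mono) (auto simp: mult_left_le_one_le mult_right_le_one_le)
  then show ?thesis unfolding Mem_def using D1 by (simp add: mult_le_cancel_left1)
qed

lemma Rate1_nonneg: "0 \<le> Rate1" unfolding Rate1_def using rho_le_1 mu0 r1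
  by (intro mult_nonneg_nonneg divide_nonneg_nonneg sum_nonneg) auto

lemma Rate2_nonneg: "0 \<le> Rate2" unfolding Rate2_def using Mem_le D1 by simp

lemma card_relay_cache_idx_le: "real (card relay_cache_idx) \<le> N * real F"
proof -
  have "card relay_cache_idx = D * sR" by (simp add: relay_cache_idx_def card_cartesian_product card_relay_segs)
  then have "real (card relay_cache_idx) = real D * real sR" by simp
  also have "\<dots> \<le> real D * (rho * real S0)" using sR_upper D1 by (intro mult_left_mono) auto
  also have "\<dots> = N * (real r * real S0)" using D1 by (simp add: rho_def)
  also have "\<dots> \<le> N * real F" using S0_le N0 by (intro mult_left_mono) auto
  finally show ?thesis .
qed

lemma finite_relay_cache_idx: "finite relay_cache_idx" by (simp add: relay_cache_idx_def finite_relay_segs)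

lemma relay_users_memI: "k \<in> users h r \<Longrightarrow> i \<in> k \<Longrightarrow> k \<in> relay_users i" by (simp add: relay_users_def)

lemma sum_choose_mult_m_le:
  assumes "\<And>t. t \<le> Kh \<Longrightarrow> 0 \<le> w t"
  shows "(\<Sum>t\<le>Kh. real (Kh choose t) * w t * real (m t)) \<le> (1 - rho) * real S0 * (\<Sum>t\<le>Kh. \<mu> t * w t)"
proof -
  have "real (Kh choose t) * w t * real (m t) \<le> w t * (\<mu> t * (1 - rho) * real S0)" if "t \<le> Kh" for t
    using mult_left_mono[OF choose_mult_m_le[OF that] assms[OF that]] by (simp add: algebra_simps)
  then have "(\<Sum>t\<le>Kh. real (Kh choose t) * w t * real (m t)) \<le> (\<Sum>t\<le>Kh. w t * (\<mu> t * (1 - rho) * real S0))"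
    by (intro sum_mono) auto
  also have "\<dots> = (1 - rho) * real S0 * (\<Sum>t\<le>Kh. \<mu> t * w t)"
    unfolding sum_distrib_left by (rule sum.cong) (simp_all add: algebra_simps)
  finally show ?thesis .
qed

lemma card_user_segs_le:
  assumes k: "k \<in> users h r" and i: "i \<in> k"
  shows "real (card (user_segs i k)) \<le> a * rho * real S0 + (1 - rho) * real S0 * cache_frac"
proof -
  have "i < h" using users_memD[OF k] i by auto
  let ?T = "{T\<in>Pow (relay_users i). k \<in> T}"
  have "card (user_segs i k) \<le> card (Shared ` {..<sA}) + card (\<Union>T\<in>?T. Subfile T ` {..<m (card T)})"
    unfolding user_segs_def by (rule card_Un_le)
  also have "\<dots> \<le> sA + (\<Sum>T\<in>?T. m (card T))"
    by (intro add_mono card_UN_image_lessThan_le) (simp_all add: finite_relay_users card_image inj_on_def)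
  finally have "real (card (user_segs i k)) \<le> real sA + (\<Sum>T\<in>?T. real (m (card T)))"
    by (simp only: of_nat_sum[symmetric] of_nat_add[symmetric] of_nat_le_iff)
  moreover have "(\<Sum>T\<in>?T. real (m (card T))) = (\<Sum>t\<le>Kh. real (Kh choose t) * (real t / real Kh) * real (m t))"
    using sum_Pow_card_mem[OF finite_relay_users relay_users_memI[OF k i], where f="\<lambda>t. real (m t)"]
      card_relay_users[OF \<open>i < h\<close>] by simp
  moreover have "\<dots> \<le> (1 - rho) * real S0 * cache_frac"
    by (rule order.trans[OF sum_choose_mult_m_le]) (simp_all add: cache_frac_def)
  ultimately show ?thesis using sA_upper by linarith
qed

lemma card_user_cache_idx_le:
  assumes k: "k \<in> users h r"
  shows "real (card (user_cache_idx k)) \<le> Mem * real F"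
proof -
  have fk: "finite k" "card k = r" using users_memD[OF k] by auto
  have fZR: "finite (user_segs i k)" for i
    unfolding user_segs_def by (intro finite_UnI finite_UN_I finite_imageI) (auto simp: finite_relay_users)
  have "card (user_cache_idx k) = (\<Sum>i\<in>k. card ({1..D} \<times> user_segs i k))"
    unfolding user_cache_idx_def by (rule card_SigmaI) (use fk fZR in auto)
  then have "real (card (user_cache_idx k)) = (\<Sum>i\<in>k. real D * real (card (user_segs i k)))"
    by (simp add: card_cartesian_product)
  also have "\<dots> \<le> (\<Sum>i\<in>k. real D * (a * rho * real S0 + (1 - rho) * real S0 * cache_frac))"
    by (intro sum_mono mult_left_mono card_user_segs_le[OF k]) auto
  also have "\<dots> = real r * real S0 * Mem" using fk by (simp add: Mem_def algebra_simps)
  also have "\<dots> \<le> Mem * real F" using mult_right_mono[OF S0_le Mem_nonneg] by (simp add: mult.commute)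
  finally show ?thesis .
qed

lemma finite_user_cache_idx: "k \<in> users h r \<Longrightarrow> finite (user_cache_idx k)"
  unfolding user_cache_idx_def user_segs_def using users_memD finite_relay_users
  by (intro finite_SigmaI finite_cartesian_product finite_Un conjI finite_UN_I) auto

lemma finite_leftover: "finite (leftover i)" by (simp add: leftover_def)

lemma finite_server_idx: "finite (server_idx i)"
  unfolding server_idx_def by (intro finite_UnI finite_UN_I finite_imageI) (auto simp: finite_relay_users finite_leftover)

lemma card_server_idx_le:
  assumes ih: "i < h"
  shows "real (card (server_idx i)) \<le> Rate1 * real F + real Kh * real c0"
proof -
  let ?A = "\<Union>S'\<in>Pow (relay_users i) - {{}}. Xor S' ` {..<m (card S' - 1)}"
  let ?L = "\<Union>u\<in>relay_users i. Plain u ` leftover i"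
  have "card ?A \<le> (\<Sum>S'\<in>Pow (relay_users i) - {{}}. m (card S' - 1))"
    by (rule card_UN_image_lessThan_le) (simp add: finite_relay_users)
  then have "real (card ?A) \<le> (\<Sum>S'\<in>Pow (relay_users i) - {{}}. real (m (card S' - 1)))"
    by (simp only: of_nat_sum[symmetric] of_nat_le_iff)
  also have "\<dots> = (\<Sum>t\<le>Kh. real (Kh choose t) * ((real Kh - real t) / (real t + 1)) * real (m t))"
    using sum_Pow_nonempty_card_pred[OF finite_relay_users, where f="\<lambda>t. real (m t)"]
      card_relay_users[OF ih] Kh_ge_1 by simp
  also have "\<dots> \<le> (1 - rho) * real S0 * (\<Sum>t\<le>Kh. \<mu> t * ((real Kh - real t) / (real t + 1)))"
    by (rule sum_choose_mult_m_le) simp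
  also have "\<dots> = real r * real S0 * Rate1" using r1 by (simp add: Rate1_def)
  also have "\<dots> \<le> Rate1 * real F" using mult_right_mono[OF S0_le Rate1_nonneg] by (simp add: mult.commute)
  finally have A: "real (card ?A) \<le> Rate1 * real F" .
  have "card ?L \<le> (\<Sum>u\<in>relay_users i. card (Plain u ` leftover i))"
    by (rule card_UN_le) (simp add: finite_relay_users)
  also have "\<dots> = Kh * card (leftover i)" by (simp add: card_image inj_on_def card_relay_users[OF ih])
  finally have "real (card ?L) \<le> real Kh * real (card (leftover i))"
    by (simp only: of_nat_mult[symmetric] of_nat_le_iff)
  also have "\<dots> \<le> real Kh * real c0" using card_leftover_le[OF ih] by (intro mult_left_mono) auto
  finally have L: "real (card ?L) \<le> real Kh * real c0" .
  have "card (server_idx i) \<le> card ?A + card ?L" unfolding server_idx_def by (rule card_Un_le)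
  then have "real (card (server_idx i)) \<le> real (card ?A) + real (card ?L)"
    by (simp only: of_nat_add[symmetric] of_nat_le_iff)
  then show ?thesis using A L by linarith
qed

lemma finite_relay_signal_idx: "finite (relay_signal_idx i (d :: nat set \<Rightarrow> nat) k)"
  unfolding relay_signal_idx_def by (intro finite_UnI finite_UN_I finite_imageI finite_cartesian_product) (auto simp: finite_relay_users finite_leftover)

lemma relay_only_share_le:
  "(1 - rho) * real S0 * (1 - cache_frac) + (real sR - real sA) \<le> Rate2 * real F + 1"
proof -
  have frac: "Mem / real D = a * rho + (1 - rho) * cache_frac" using D1 by (simp add: Mem_def)
  have "real S0 * (1 - Mem / real D) =
      (1 - rho) * real S0 * (1 - cache_frac) + (rho * real S0 - a * rho * real S0)"
    unfolding frac by (simp add: algebra_simps)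
  moreover have "real S0 * (1 - Mem / real D) = real r * real S0 * Rate2" using r1 by (simp add: Rate2_def)
  moreover have "real r * real S0 * Rate2 \<le> Rate2 * real F"
    using mult_right_mono[OF S0_le Rate2_nonneg] by (simp add: mult.commute)
  ultimately show ?thesis using sR_upper sA_lower by linarith
qed

lemma card_relay_signal_idx_le:
  fixes d :: "nat set \<Rightarrow> nat"
  assumes k: "k \<in> users h r" and i: "i \<in> k"
  shows "real (card (relay_signal_idx i d k)) \<le> Rate2 * real F + real c0 + 1"
proof -
  have ih: "i < h" using users_memD[OF k] i by auto
  let ?A = "\<Union>T\<in>Pow (relay_users i - {k}). Xor (insert k T) ` {..<m (card T)}"
  let ?L = "Plain k ` leftover i"
  let ?R = "{d k} \<times> RelayOnly ` {..<sR - sA}"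
  have "card (relay_signal_idx i d k) \<le> card (?A \<union> ?L) + card ?R"
    unfolding relay_signal_idx_def by (rule order.trans[OF card_Un_le]) (simp add: card_image)
  also have "\<dots> \<le> card ?A + card ?L + card ?R" by (simp add: card_Un_le)
  also have "card ?A \<le> (\<Sum>T\<in>Pow (relay_users i - {k}). m (card T))"
    by (rule card_UN_image_lessThan_le) (simp add: finite_relay_users)
  also have "card ?L \<le> card (leftover i)" by (rule card_image_le[OF finite_leftover])
  also have "card ?R = sR - sA" by (simp add: card_cartesian_product card_image inj_on_def)
  finally have card_le: "real (card (relay_signal_idx i d k)) \<le>
      (\<Sum>T\<in>Pow (relay_users i - {k}). real (m (card T))) + real (card (leftover i)) + (real sR - real sA)"
    using sA_le_sR
    by (simp only: of_nat_sum[symmetric] of_nat_diff[symmetric] of_nat_add[symmetric] of_nat_le_iff)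
  have frac: "(\<Sum>t\<le>Kh. \<mu> t * (real Kh - real t) / real Kh) = 1 - cache_frac"
  proof -
    have "(\<Sum>t\<le>Kh. \<mu> t * (real Kh - real t) / real Kh) = (\<Sum>t\<le>Kh. \<mu> t - \<mu> t * real t / real Kh)"
      using Kh_ge_1 by (intro sum.cong) (simp_all add: field_simps)
    also have "\<dots> = 1 - cache_frac" using mu1 by (simp add: sum_subtractf cache_frac_def Kh_def)
    finally show ?thesis .
  qed
  have "(\<Sum>T\<in>Pow (relay_users i - {k}). real (m (card T))) =
      (\<Sum>t\<le>Kh. real (Kh choose t) * ((real Kh - real t) / real Kh) * real (m t))"
    using sum_Pow_Diff_card[OF finite_relay_users relay_users_memI[OF k i], where f="\<lambda>t. real (m t)"]
      card_relay_users[OF ih] by simp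
  also have "\<dots> \<le> (1 - rho) * real S0 * (1 - cache_frac)"
    by (rule order.trans[OF sum_choose_mult_m_le]) (simp_all add: frac)
  finally have "(\<Sum>T\<in>Pow (relay_users i - {k}). real (m (card T))) \<le> (1 - rho) * real S0 * (1 - cache_frac)" .
  then show ?thesis using card_le relay_only_share_le card_leftover_le[OF ih] by linarith
qed

lemma F_le_r_mult_B: "F \<le> r * B"
proof -
  have "F + r - 1 < r * ((F + r - 1) div r) + r"
    using r1 by (metis add.commute add_less_cancel_left div_mult_mod_eq mod_less_divisor
        mult.commute le_trans zero_less_one less_le_trans)
  then show ?thesis using r1 by (simp add: B_def)
qed

lemma user_cache_bit:
  assumes "user_cache k W = user_cache k W'" and "(i, n, s) \<in> user_cache_idx k"
  shows "cbit W n i (pos i s) = cbit W' n i (pos i s)"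
  using fun_cong[OF assms(1), of "(i, n, s)"] assms(2) by (simp add: user_cache_def)

lemma relay_signal_server_bit:
  assumes "relay_signal i d k W = relay_signal i d k W'"
    and "Inl e \<in> relay_signal_idx i d k" and "e \<in> server_idx i"
  shows "server_bit i d W e = server_bit i d W' e"
  using fun_cong[OF assms(1), of "Inl e"] assms(2,3)
  by (simp add: relay_signal_def forward_def server_signal_def)

lemma relay_signal_relay_bit:
  assumes "relay_signal i d k W = relay_signal i d k W'"
    and "Inr (n, s) \<in> relay_signal_idx i d k" and "(n, s) \<in> relay_cache_idx"
  shows "cbit W n i (pos i s) = cbit W' n i (pos i s)"
  using fun_cong[OF assms(1), of "Inr (n, s)"] assms(2,3)
  by (simp add: relay_signal_def forward_def relay_cache_def)

text \<open>User k knows all bits \<open>Subfile (S - {u}) q\<close> with u \<noteq> k of the XOR for S = insert k T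
  from its own cache, so the XOR reveals the one bit it misses.\<close>

lemma subfile_bit_from_xor:
  assumes d: "d \<in> demands h r D" and k: "k \<in> users h r" and i: "i \<in> k"
    and Z: "user_cache k W = user_cache k W'" and Y: "relay_signal i d k W = relay_signal i d k W'"
    and T: "T \<subseteq> relay_users i" "k \<notin> T" and q: "q < m (card T)"
  shows "cbit W (d k) i (pos i (Subfile T q)) = cbit W' (d k) i (pos i (Subfile T q))"
proof -
  define S' where "S' = insert k T"
  have kU: "k \<in> relay_users i" using relay_users_memI[OF k i] .
  have "finite T" using T finite_relay_users finite_subset by blast
  then have fS: "finite S'" and cS: "card S' - 1 = card T" using T(2) by (simp_all add: S'_def)
  have S'U: "S' \<subseteq> relay_users i" using T kU by (simp add: S'_def)
  let ?g = "\<lambda>u. cbit W (d u) i (pos i (Subfile (S' - {u}) q))"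
  let ?g' = "\<lambda>u. cbit W' (d u) i (pos i (Subfile (S' - {u}) q))"
  have "server_bit i d W (Xor S' q) = server_bit i d W' (Xor S' q)"
  proof (rule relay_signal_server_bit[OF Y])
    have "T \<in> Pow (relay_users i - {k})" using T by auto
    then show "Inl (Xor S' q) \<in> relay_signal_idx i d k"
      using q unfolding relay_signal_idx_def S'_def by blast
    have "S' \<in> Pow (relay_users i) - {{}}" using S'U by (auto simp: S'_def)
    moreover have "q < m (card S' - 1)" using q cS by simp
    ultimately show "Xor S' q \<in> server_idx i" unfolding server_idx_def by blast
  qed
  then have par: "odd (card {u\<in>S'. ?g u}) = odd (card {u\<in>S'. ?g' u})"
    by (simp add: server_bit_def)
  have others: "\<forall>u\<in>S' - {k}. ?g u = ?g' u"
  proof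
    fix u assume u: "u \<in> S' - {k}"
    then have "u \<in> users h r" using T by (auto simp: S'_def relay_users_def)
    have "S' - {u} \<in> {T\<in>Pow (relay_users i). k \<in> T}" using S'U u by (auto simp: S'_def)
    moreover have "q < m (card (S' - {u}))" using u fS cS q by (simp add: card_Diff_singleton)
    ultimately have "Subfile (S' - {u}) q \<in> user_segs i k" unfolding user_segs_def by blast
    then have "(i, d u, Subfile (S' - {u}) q) \<in> user_cache_idx k"
      using i demands_memD[OF d \<open>u \<in> users h r\<close>] by (simp add: user_cache_idx_def)
    then show "?g u = ?g' u" by (rule user_cache_bit[OF Z])
  qed
  have "?g k = ?g' k" by (rule odd_card_filter_cancel[OF fS _ others par]) (simp add: S'_def)
  moreover have "S' - {k} = T" using T(2) by (auto simp: S'_def)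
  ultimately show ?thesis by simp
qed

lemma coded_bit_recoverable:
  assumes d: "d \<in> demands h r D" and k: "k \<in> users h r" and i: "i \<in> k"
    and Z: "user_cache k W = user_cache k W'" and Y: "relay_signal i d k W = relay_signal i d k W'"
    and q: "q < S"
  shows "cbit W (d k) i q = cbit W' (d k) i q"
proof (cases "q \<in> pos i ` placed i")
  case False
  then have "q \<in> leftover i" using q by (simp add: leftover_def)
  then have "server_bit i d W (Plain k q) = server_bit i d W' (Plain k q)"
    using relay_users_memI[OF k i]
    by (intro relay_signal_server_bit[OF Y]) (auto simp: relay_signal_idx_def server_idx_def)
  then show ?thesis by (simp add: server_bit_def)
next
  case True
  then obtain s where "s \<in> placed i" and qs: "q = pos i s" by blast
  then consider (shared) q' where "s = Shared q'" "q' < sA"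
    | (relay) q' where "s = RelayOnly q'" "q' < sR - sA"
    | (subfile) T q' where "T \<subseteq> relay_users i" "q' < m (card T)" "s = Subfile T q'"
    by (auto simp: placed_def relay_segs_def subfile_segs_def)
  then show ?thesis
  proof cases
    case shared
    then have "(i, d k, s) \<in> user_cache_idx k"
      using i demands_memD[OF d k] by (simp add: user_cache_idx_def user_segs_def)
    then show ?thesis unfolding qs by (rule user_cache_bit[OF Z])
  next
    case relay
    then show ?thesis unfolding qs using demands_memD[OF d k]
      by (intro relay_signal_relay_bit[OF Y]) (auto simp: relay_signal_idx_def relay_cache_idx_def relay_segs_def)
  next
    case (subfile T q')
    show ?thesis
    proof (cases "k \<in> T")
      case True
      then have "(i, d k, s) \<in> user_cache_idx k"
        using subfile i demands_memD[OF d k] by (auto simp: user_cache_idx_def user_segs_def)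
      then show ?thesis unfolding qs by (rule user_cache_bit[OF Z])
    next
      case False
      then show ?thesis unfolding qs subfile(3) using subfile(1,2)
        by (intro subfile_bit_from_xor[OF d k i Z Y])
    qed
  qed
qed

lemma decodable:
  assumes d: "d \<in> demands h r D" and k: "k \<in> users h r"
    and W: "W \<in> libraries D F" and W': "W' \<in> libraries D F"
    and Z: "user_cache k W = user_cache k W'"
    and Y: "\<forall>i\<in>k. relay_signal i d k W = relay_signal i d k W'"
  shows "W (d k) = W' (d k)"
proof (rule list_eq_if_coded_bits_eq)
  have "length (W (d k)) = F" "length (W' (d k)) = F"
    using W W' demands_memD[OF d k] by (auto simp: libraries_def)
  then show "length (W (d k)) = length (W' (d k))" "length (W (d k)) \<le> r * B"
    using F_le_r_mult_B by simp_all
  show "k \<subseteq> {..<h}" "card k = r" using users_memD[OF k] by auto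
  show "\<forall>i\<in>k. \<forall>q < B + r + h * r. coded_bit r B (W (d k)) i q = coded_bit r B (W' (d k)) i q"
    using coded_bit_recoverable[OF d k _ Z] Y by (simp add: cbit_def S_def)
qed

lemma valid_scheme_exists:
  assumes eps: "\<epsilon> > 0" and dl: "\<delta> > 0"
    and F_large: "real Kh * real c0 + real c0 + 1 \<le> \<delta> * real F"
  shows "\<exists>V Z X Y G. valid_scheme h r D F Mem N (Rate1 + \<delta>) (Rate2 + \<delta>) \<epsilon> V Z X Y G"
proof (rule valid_scheme_of_message_counts[where \<phi> = forward, OF eps])
  show "\<forall>j<h. card (relay_cache j ` libraries D F) \<le> 2 ^ card relay_cache_idx"
    by (intro allI impI card_image_restrict_le[OF finite_relay_cache_idx]) (simp add: relay_cache_def)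
  show "real (card relay_cache_idx) \<le> N * real F" by (rule card_relay_cache_idx_le)
  show "\<forall>k\<in>users h r. card (user_cache k ` libraries D F) \<le> 2 ^ nat \<lfloor>Mem * real F\<rfloor>"
    by (intro ballI card_image_restrict_le_floor[OF finite_user_cache_idx _ card_user_cache_idx_le])
      (simp_all add: user_cache_def)
  show "real (nat \<lfloor>Mem * real F\<rfloor>) \<le> Mem * real F" using Mem_nonneg by (intro of_nat_floor) simp
  show "\<forall>d\<in>demands h r D. \<forall>i<h. card (server_signal i d ` libraries D F) \<le> 2 ^ nat \<lfloor>(Rate1 + \<delta>) * real F\<rfloor>"
  proof (intro ballI allI impI card_image_restrict_le_floor[OF finite_server_idx])
    fix i assume "i < h"
    have "0 \<le> real c0" by simp
    then show "real (card (server_idx i)) \<le> (Rate1 + \<delta>) * real F"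
      using card_server_idx_le[OF \<open>i < h\<close>] F_large by (subst distrib_right) linarith
  qed (simp add: server_signal_def)
  show "real (nat \<lfloor>(Rate1 + \<delta>) * real F\<rfloor>) \<le> (Rate1 + \<delta>) * real F"
    using Rate1_nonneg dl by (intro of_nat_floor) simp
  show "\<forall>d\<in>demands h r D. \<forall>k\<in>users h r. \<forall>i\<in>k.
      card (relay_signal i d k ` libraries D F) \<le> 2 ^ nat \<lfloor>(Rate2 + \<delta>) * real F\<rfloor>"
  proof (intro ballI card_image_restrict_le_floor[OF finite_relay_signal_idx])
    fix d :: "nat set \<Rightarrow> nat" and k i assume k: "k \<in> users h r" and i: "i \<in> k"
    have "0 \<le> real Kh * real c0" by simp
    then show "real (card (relay_signal_idx i d k)) \<le> (Rate2 + \<delta>) * real F"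
      using card_relay_signal_idx_le[OF k i, of d] F_large by (subst distrib_right) linarith
  qed (simp add: relay_signal_def forward_def)
  show "real (nat \<lfloor>(Rate2 + \<delta>) * real F\<rfloor>) \<le> (Rate2 + \<delta>) * real F"
    using Rate2_nonneg dl by (intro of_nat_floor) simp
  show "\<And>d i k W. relay_signal i d k W = forward i d k (server_signal i d W) (relay_cache i W)"
    by (simp add: relay_signal_def)
qed (rule decodable)

end

section \<open>The achievable region\<close>

lemma achievable_mixed:
  fixes h r D :: nat and N a \<delta> :: real and \<mu> :: "nat \<Rightarrow> real"
  defines "K \<equiv> (h - 1) choose (r - 1)"
  assumes "1 \<le> r" and "r < h" and "1 \<le> D" and "0 \<le> N" and "N * real r \<le> real D"
    and "0 \<le> a" and "a \<le> 1" and "\<And>t. 0 \<le> \<mu> t" and "(\<Sum>t\<le>K. \<mu> t) = 1" and "\<delta> > 0"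
  shows "achievable h r D (mixed_memory r D K N a \<mu>) N (mixed_rate1 r D K N \<mu> + \<delta>)
           ((1 - mixed_memory r D K N a \<mu> / real D) / real r + \<delta>)"
  unfolding achievable_def
proof (intro allI impI)
  fix \<epsilon> :: real assume "\<epsilon> > 0"
  define C where "C = r + h * r + 2 + 2 ^ K"
  define F0 where "F0 = nat \<lceil>(real K * real C + real C + 1) / \<delta>\<rceil>"
  have "\<exists>V Z X Y G. valid_scheme h r D F (mixed_memory r D K N a \<mu>) N (mixed_rate1 r D K N \<mu> + \<delta>)
           ((1 - mixed_memory r D K N a \<mu> / real D) / real r + \<delta>) \<epsilon> V Z X Y G"
    if "F0 \<le> F" for F
  proof -
    interpret combination_scheme h r D N a \<mu> F
      by unfold_locales (use assms in auto)
    have "(real K * real C + real C + 1) / \<delta> \<le> real F"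
      using \<open>F0 \<le> F\<close> unfolding F0_def by linarith
    then have "real Kh * real c0 + real c0 + 1 \<le> \<delta> * real F"
      using \<open>\<delta> > 0\<close> by (simp add: field_simps Kh_def c0_def C_def K_def)
    from valid_scheme_exists[OF \<open>\<epsilon> > 0\<close> \<open>\<delta> > 0\<close> this] show ?thesis
      by (simp add: Rate2_def Mem_eq_mixed_memory Rate1_eq_mixed_rate1 Kh_def K_def)
  qed
  then show "\<exists>F0. \<forall>F\<ge>F0. \<exists>V Z X Y G. valid_scheme h r D F (mixed_memory r D K N a \<mu>) N
      (mixed_rate1 r D K N \<mu> + \<delta>) ((1 - mixed_memory r D K N a \<mu> / real D) / real r + \<delta>) \<epsilon> V Z X Y G"
    by blast
qed

definition mixed_region :: "nat \<Rightarrow> nat \<Rightarrow> nat \<Rightarrow> real \<Rightarrow> (real \<times> real \<times> real) set" where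
  "mixed_region r D K N =
     {(mixed_memory r D K N a \<mu>, mixed_rate1 r D K N \<mu>, (1 - mixed_memory r D K N a \<mu> / real D) / real r)
       | a \<mu>. 0 \<le> a \<and> a \<le> 1 \<and> (\<forall>t. 0 \<le> \<mu> t) \<and> (\<Sum>t\<le>K. \<mu> t) = 1}"

lemma convex_mixed_region: "convex (mixed_region r D K N)"
proof (rule convexI)
  fix x y and u v :: real
  assume "x \<in> mixed_region r D K N" "y \<in> mixed_region r D K N" "0 \<le> u" "0 \<le> v" "u + v = 1"
  then obtain a \<mu> a' \<mu>' where
      x: "x = (mixed_memory r D K N a \<mu>, mixed_rate1 r D K N \<mu>, (1 - mixed_memory r D K N a \<mu> / real D) / real r)"
        "0 \<le> a" "a \<le> 1" "\<forall>t. 0 \<le> \<mu> t" "(\<Sum>t\<le>K. \<mu> t) = 1"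
    and y: "y = (mixed_memory r D K N a' \<mu>', mixed_rate1 r D K N \<mu>', (1 - mixed_memory r D K N a' \<mu>' / real D) / real r)"
        "0 \<le> a'" "a' \<le> 1" "\<forall>t. 0 \<le> \<mu>' t" "(\<Sum>t\<le>K. \<mu>' t) = 1"
    unfolding mixed_region_def by blast
  define b where "b = u * a + v * a'"
  define \<nu> where "\<nu> t = u * \<mu> t + v * \<mu>' t" for t
  have linear: "(\<Sum>t\<le>K. \<nu> t * g t) = u * (\<Sum>t\<le>K. \<mu> t * g t) + v * (\<Sum>t\<le>K. \<mu>' t * g t)"
    for g :: "nat \<Rightarrow> real"
    by (simp add: \<nu>_def distrib_right sum.distrib sum_distrib_left mult.assoc)
  have M: "mixed_memory r D K N b \<nu> = u * mixed_memory r D K N a \<mu> + v * mixed_memory r D K N a' \<mu>'"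
    using linear[of "\<lambda>t. real t / real K"] by (simp add: mixed_memory_def b_def algebra_simps)
  have R1: "mixed_rate1 r D K N \<nu> = u * mixed_rate1 r D K N \<mu> + v * mixed_rate1 r D K N \<mu>'"
    using linear[of "\<lambda>t. (real K - real t) / (real t + 1)"] by (simp add: mixed_rate1_def algebra_simps)
  have R2: "(1 - (u * A + v * A') / real D) / real r =
      u * ((1 - A / real D) / real r) + v * ((1 - A' / real D) / real r)" for A A'
    using \<open>u + v = 1\<close>
    by (simp add: diff_divide_distrib add_divide_distrib algebra_simps) (metis add_divide_distrib)
  have "0 \<le> b" "b \<le> 1"
    using x(2,3) y(2,3) \<open>0 \<le> u\<close> \<open>0 \<le> v\<close> \<open>u + v = 1\<close> unfolding b_def
    by (auto intro: convex_bound_le)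
  moreover have "\<forall>t. 0 \<le> \<nu> t" using x(4) y(4) \<open>0 \<le> u\<close> \<open>0 \<le> v\<close> by (simp add: \<nu>_def)
  moreover have "(\<Sum>t\<le>K. \<nu> t) = 1"
    using x(5) y(5) \<open>u + v = 1\<close> by (simp add: \<nu>_def sum.distrib sum_distrib_left[symmetric])
  ultimately have "(mixed_memory r D K N b \<nu>, mixed_rate1 r D K N \<nu>,
      (1 - mixed_memory r D K N b \<nu> / real D) / real r) \<in> mixed_region r D K N"
    unfolding mixed_region_def by blast
  then show "u *\<^sub>R x + v *\<^sub>R y \<in> mixed_region r D K N"
    unfolding M R1 R2 by (simp add: x(1) y(1))
qed

text \<open>The corner point for (t1, t2): a = t1 / K and \<mu> is the point mass at t2.\<close>

lemma corner_mem_mixed_region: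
  assumes "t1 \<le> K" and "t2 \<le> K" and "1 \<le> r"
    and M: "M = (real t1 - real t2) * N * real r / real K + real t2 * real D / real K"
  shows "(M, (real K - real t2) / (real r * (real t2 + 1)) * (1 - N * real r / real D),
          1 / real r * (1 - M / real D)) \<in> mixed_region r D K N"
proof -
  define \<mu> where "\<mu> t = (if t = t2 then 1 else 0 :: real)" for t
  have point: "(\<Sum>t\<le>K. \<mu> t * g t) = g t2" for g :: "nat \<Rightarrow> real"
  proof -
    have "(\<Sum>t\<le>K. \<mu> t * g t) = (\<Sum>t\<le>K. if t = t2 then g t else 0)"
      by (rule sum.cong) (auto simp: \<mu>_def)
    then show ?thesis using \<open>t2 \<le> K\<close> by simp
  qed
  have "(\<Sum>t\<le>K. \<mu> t * real t / real K) = real t2 / real K"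
    using point[of "\<lambda>t. real t / real K"] by simp
  then have "M = mixed_memory r D K N (real t1 / real K) \<mu>"
    by (simp add: M mixed_memory_def add_divide_distrib diff_divide_distrib algebra_simps)
  moreover have "(real K - real t2) / (real r * (real t2 + 1)) * (1 - N * real r / real D) =
      mixed_rate1 r D K N \<mu>"
    using point[of "\<lambda>t. (real K - real t) / (real t + 1)"] by (simp add: mixed_rate1_def)
  moreover have "0 \<le> real t1 / real K" "real t1 / real K \<le> 1" "(\<Sum>t\<le>K. \<mu> t) = 1"
    using assms(1,2) by (auto simp: \<mu>_def divide_le_eq_1)
  ultimately show ?thesis unfolding mixed_region_def by (force simp: \<mu>_def)
qed

theorem theorem1:
  fixes h r D :: nat and N :: real
  assumes "1 \<le> r" and "r < h"
    and "h choose r \<le> D"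
    and "0 \<le> N" and "N \<le> real D / real r"
  defines "Kh \<equiv> (h - 1) choose (r - 1)"
  defines "Mt \<equiv> (\<lambda>t1 t2::nat. (real t1 - real t2) * N * real r / real Kh + real t2 * real D / real Kh)"
  defines "R1t \<equiv> (\<lambda>t2::nat. (real Kh - real t2) / (real r * (real t2 + 1)) * (1 - N * real r / real D))"
  defines "R2t \<equiv> (\<lambda>t1 t2::nat. 1 / real r * (1 - Mt t1 t2 / real D))"
  defines "P \<equiv> {(Mt t1 t2, R1t t2, R2t t1 t2) | t1 t2.
                  t1 \<le> min Kh (nat \<lfloor>real Kh * N / real D\<rfloor>) \<and> t2 \<le> Kh}"
  shows "(\<forall>t1 t2. t1 \<le> min Kh (nat \<lfloor>real Kh * N / real D\<rfloor>) \<and> t2 \<le> Kh \<longrightarrow>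
            (\<forall>\<delta>>0. achievable h r D (Mt t1 t2) N (R1t t2 + \<delta>) (R2t t1 t2 + \<delta>)))
       \<and> (\<forall>p \<in> convex hull P. \<forall>\<delta>>0.
            achievable h r D (fst p) N (fst (snd p) + \<delta>) (snd (snd p) + \<delta>))"
proof -
  have "1 \<le> D" using assms(2,3) zero_less_binomial[of r h] by linarith
  have "N * real r \<le> real D" using assms(1,5) by (simp add: field_simps)
  have region: "\<forall>p\<in>mixed_region r D Kh N. \<forall>\<delta>>0. achievable h r D (fst p) N (fst (snd p) + \<delta>) (snd (snd p) + \<delta>)"
    unfolding mixed_region_def Kh_def
    using achievable_mixed[OF assms(1,2) \<open>1 \<le> D\<close> assms(4) \<open>N * real r \<le> real D\<close>] by auto
  have "(Mt t1 t2, R1t t2, R2t t1 t2) \<in> mixed_region r D Kh N" if "t1 \<le> Kh" "t2 \<le> Kh" for t1 t2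
    unfolding Mt_def R1t_def R2t_def by (rule corner_mem_mixed_region[OF that assms(1) refl])
  then have "P \<subseteq> mixed_region r D Kh N" unfolding P_def by auto
  then have "convex hull P \<subseteq> mixed_region r D Kh N"
    using convex_mixed_region by (rule hull_minimal)
  moreover have "(Mt t1 t2, R1t t2, R2t t1 t2) \<in> P"
    if "t1 \<le> min Kh (nat \<lfloor>real Kh * N / real D\<rfloor>) \<and> t2 \<le> Kh" for t1 t2
    using that unfolding P_def by blast
  ultimately show ?thesis using region hull_subset[of P convex] by fastforce
qed

end
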